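(* Every real planar quadratic differential system having a finite semi-elemental double saddle-node $\overline{sn}_{(2)}$ and an infinite saddle-node of type $\overline{\binom{0}{2}}SN$ located at the point at infinity in the direction defined by the eigenvector of the saddle-node with non-null eigenvalue can be brought, via an affine change of coordinates and a time rescaling, to the normal form $$\dot x = x^2+2hxy,\qquad \dot y = y+\ell x^2+2mxy+2hy^2,$$ where $h,\ell,m$ are real parameters.
   Context: A singular point $r$ of a planar vector field $X$ is semi-elemental if $\det DX(r)=0$ but $\operatorname{tr} DX(r)\neq 0$. A finite double saddle-node $\overline{sn}_{(2)}$ is a semi-elemental finite singular point of multiplicity two whose neighborhood consists of two hyperbolic sectors and one parabolic sector. Infinite singular points are those of the Poincaré compactification on the line at infinity; e.g. in the chart $x=v/w$, $y=1/w$ the line at infinity is $w=0$ and the point at infinity in the direction of the $y$-axis is $(v,w)=(0,0)$. An infinite singular point is a saddle-node of type $\overline{\binom{0}{2}}SN$ if it is a semi-elemental saddle-node of multiplicity two on the line at infinity, formed by the collision of an infinite saddle with an infinite node, i.e. its eigendirection with zero eigenvalue is the line at infinity. *)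

theory Defs
  imports "HOL-Analysis.Analysis"
begin

definition poly2 :: "(nat \<Rightarrow> nat \<Rightarrow> real) \<Rightarrow> real \<Rightarrow> real \<Rightarrow> real" where
  "poly2 c x y = (\<Sum>i\<le>2. \<Sum>j\<le>2 - i. c i j * x ^ i * y ^ j)"

definition quadratic_system :: "(nat \<Rightarrow> nat \<Rightarrow> real) \<Rightarrow> (nat \<Rightarrow> nat \<Rightarrow> real) \<Rightarrow> bool" where
  "quadratic_system p q \<longleftrightarrow> (\<exists>i j. i + j = 2 \<and> (p i j \<noteq> 0 \<or> q i j \<noteq> 0))"

definition pdx :: "(real \<Rightarrow> real \<Rightarrow> real) \<Rightarrow> real \<Rightarrow> real \<Rightarrow> real" where
  "pdx F x y = deriv (\<lambda>t. F t y) x"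

definition pdy :: "(real \<Rightarrow> real \<Rightarrow> real) \<Rightarrow> real \<Rightarrow> real \<Rightarrow> real" where
  "pdy F x y = deriv (\<lambda>t. F x t) y"

definition jac_det :: "(real \<Rightarrow> real \<Rightarrow> real) \<Rightarrow> (real \<Rightarrow> real \<Rightarrow> real) \<Rightarrow> real \<Rightarrow> real \<Rightarrow> real" where
  "jac_det F G x y = pdx F x y * pdy G x y - pdy F x y * pdx G x y"

definition jac_tr :: "(real \<Rightarrow> real \<Rightarrow> real) \<Rightarrow> (real \<Rightarrow> real \<Rightarrow> real) \<Rightarrow> real \<Rightarrow> real \<Rightarrow> real" where
  "jac_tr F G x y = pdx F x y + pdy G x y"

definition semi_elemental :: "(real \<Rightarrow> real \<Rightarrow> real) \<Rightarrow> (real \<Rightarrow> real \<Rightarrow> real) \<Rightarrow> real \<Rightarrow> real \<Rightarrow> bool" where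
  "semi_elemental F G x y \<longleftrightarrow>
     F x y = 0 \<and> G x y = 0 \<and> jac_det F G x y = 0 \<and> jac_tr F G x y \<noteq> 0"

definition hess_form :: "(real \<Rightarrow> real \<Rightarrow> real) \<Rightarrow> real \<Rightarrow> real \<Rightarrow> real \<Rightarrow> real \<Rightarrow> real" where
  "hess_form F x y v1 v2 =
     pdx (pdx F) x y * v1 ^ 2 + 2 * pdy (pdx F) x y * v1 * v2 + pdy (pdy F) x y * v2 ^ 2"

text \<open>For a semi-elemental point with kernel vector v of DX and left kernel
  vector w of DX, the multiplicity (intersection multiplicity of F and G) is exactly
  two iff w . D^2X[v,v] \<noteq> 0; by Andronov's theorem a semi-elemental point of
  multiplicity two is a saddle-node (two hyperbolic sectors, one parabolic sector).\<close>
definition double_saddle_node :: "(real \<Rightarrow> real \<Rightarrow> real) \<Rightarrow> (real \<Rightarrow> real \<Rightarrow> real) \<Rightarrow> real \<Rightarrow> real \<Rightarrow> bool" where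
  "double_saddle_node F G x y \<longleftrightarrow> semi_elemental F G x y \<and>
     (\<exists>v1 v2 w1 w2. (v1, v2) \<noteq> (0, 0) \<and> (w1, w2) \<noteq> (0, 0) \<and>
        pdx F x y * v1 + pdy F x y * v2 = 0 \<and> pdx G x y * v1 + pdy G x y * v2 = 0 \<and>
        w1 * pdx F x y + w2 * pdx G x y = 0 \<and> w1 * pdy F x y + w2 * pdy G x y = 0 \<and>
        w1 * hess_form F x y v1 v2 + w2 * hess_form G x y v1 v2 \<noteq> 0)"

text \<open>(e1,e2) is an eigenvector of DX(x,y) for the non-null eigenvalue tr DX(x,y)
  (at a point with det DX = 0 the eigenvalues are 0 and tr DX).\<close>
definition nonnull_eigvec :: "(real \<Rightarrow> real \<Rightarrow> real) \<Rightarrow> (real \<Rightarrow> real \<Rightarrow> real) \<Rightarrow> real \<Rightarrow> real \<Rightarrow> real \<Rightarrow> real \<Rightarrow> bool" where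
  "nonnull_eigvec F G x y e1 e2 \<longleftrightarrow> (e1, e2) \<noteq> (0, 0) \<and>
     pdx F x y * e1 + pdy F x y * e2 = jac_tr F G x y * e1 \<and>
     pdx G x y * e1 + pdy G x y * e2 = jac_tr F G x y * e2"

text \<open>Poincare compactification, chart around the infinite point in direction e = (e1,e2):
  (x,y) = (v f + e) / w with f = (e2,-e1); the line at infinity is w = 0 and the
  infinite point in direction e is (v,w) = (0,0).  For e = (0,1) this is exactly the
  chart x = v/w, y = 1/w.  homog c e1 e2 v w = w^2 * c((v f + e)/w), as a polynomial.\<close>
definition homog :: "(nat \<Rightarrow> nat \<Rightarrow> real) \<Rightarrow> real \<Rightarrow> real \<Rightarrow> real \<Rightarrow> real \<Rightarrow> real" where
  "homog c e1 e2 v w =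
     (\<Sum>i\<le>2. \<Sum>j\<le>2 - i. c i j * (v * e2 + e1) ^ i * (e2 - v * e1) ^ j * w ^ (2 - i - j))"

text \<open>The compactified (polynomial, after multiplication by w^(n-1), n = 2) vector field
  in this chart: writing (x,y) = alpha f + beta e, v = alpha/beta, w = 1/beta.\<close>
definition inf_V :: "(nat \<Rightarrow> nat \<Rightarrow> real) \<Rightarrow> (nat \<Rightarrow> nat \<Rightarrow> real) \<Rightarrow> real \<Rightarrow> real \<Rightarrow> real \<Rightarrow> real \<Rightarrow> real" where
  "inf_V p q e1 e2 v w = (1 / (e1 ^ 2 + e2 ^ 2)) *
     ((e2 * homog p e1 e2 v w - e1 * homog q e1 e2 v w)
      - v * (e1 * homog p e1 e2 v w + e2 * homog q e1 e2 v w))"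

definition inf_W :: "(nat \<Rightarrow> nat \<Rightarrow> real) \<Rightarrow> (nat \<Rightarrow> nat \<Rightarrow> real) \<Rightarrow> real \<Rightarrow> real \<Rightarrow> real \<Rightarrow> real \<Rightarrow> real" where
  "inf_W p q e1 e2 v w = (1 / (e1 ^ 2 + e2 ^ 2)) *
     (- w * (e1 * homog p e1 e2 v w + e2 * homog q e1 e2 v w))"

text \<open>The infinite point in direction e is a saddle-node of type (0 2)SN: a semi-elemental
  saddle-node of multiplicity two of the compactified field whose zero-eigenvalue
  eigendirection is the line at infinity (w = 0), i.e. DY(0,0) (1,0) = 0.\<close>
definition inf_saddle_node_02 :: "(nat \<Rightarrow> nat \<Rightarrow> real) \<Rightarrow> (nat \<Rightarrow> nat \<Rightarrow> real) \<Rightarrow> real \<Rightarrow> real \<Rightarrow> bool" where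
  "inf_saddle_node_02 p q e1 e2 \<longleftrightarrow>
     double_saddle_node (inf_V p q e1 e2) (inf_W p q e1 e2) 0 0 \<and>
     pdx (inf_V p q e1 e2) 0 0 = 0 \<and> pdx (inf_W p q e1 e2) 0 0 = 0"

end

theory Submission
  imports Defs
begin

text \<open>Since the system is quadratic, X(r + z) = DX(r) z + F(z) exactly, with F the
  homogeneous quadratic part. At the saddle-node r, take the kernel vector v and the
  eigenvector e of DX(r) for the eigenvalue \<lambda> = tr DX(r) \<noteq> 0 as a frame; they are
  independent because DX(r) e \<noteq> 0 = DX(r) v. The infinite point in direction e being
  singular means F(e) = \<kappa> e, and its zero eigendirection being the line at infinity
  means that the polar form of F satisfies B(v,e) = \<kappa> v + \<mu> e. The multiplicity two
  condition says that the v-component \<alpha> of F(v) is non-zero. Rescaling v by \<lambda>/\<alpha> and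
  time by \<lambda> yields the normal form.\<close>

definition quad_part :: "(nat \<Rightarrow> nat \<Rightarrow> real) \<Rightarrow> real \<Rightarrow> real \<Rightarrow> real" where
  "quad_part c z1 z2 = c 2 0 * z1 ^ 2 + c 1 1 * z1 * z2 + c 0 2 * z2 ^ 2"

definition quad_polar :: "(nat \<Rightarrow> nat \<Rightarrow> real) \<Rightarrow> real \<Rightarrow> real \<Rightarrow> real \<Rightarrow> real \<Rightarrow> real" where
  "quad_polar c z1 z2 w1 w2 = 2 * c 2 0 * z1 * w1 + c 1 1 * (z1 * w2 + z2 * w1) + 2 * c 0 2 * z2 * w2"

lemma poly2_expand:
  "poly2 c x y = c 0 0 + c 0 1 * y + c 0 2 * y ^ 2 + c 1 0 * x + c 1 1 * x * y + c 2 0 * x ^ 2"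
  unfolding poly2_def by (simp add: numeral_2_eq_2 atMost_Suc algebra_simps)

lemma quad_part_lincomb:
  "quad_part c (s * z1 + t * w1) (s * z2 + t * w2) =
     s ^ 2 * quad_part c z1 z2 + s * t * quad_polar c z1 z2 w1 w2 + t ^ 2 * quad_part c w1 w2"
  unfolding quad_part_def quad_polar_def by algebra

lemma pdx_poly2: "pdx (poly2 c) x y = c 1 0 + c 1 1 * y + 2 * c 2 0 * x"
  unfolding pdx_def poly2_expand
  by (rule DERIV_imp_deriv) (auto intro!: derivative_eq_intros simp: algebra_simps)

lemma pdy_poly2: "pdy (poly2 c) x y = c 0 1 + c 1 1 * x + 2 * c 0 2 * y"
  unfolding pdy_def poly2_expand
  by (rule DERIV_imp_deriv) (auto intro!: derivative_eq_intros simp: algebra_simps)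

lemma hess_form_poly2: "hess_form (poly2 c) x y v1 v2 = 2 * quad_part c v1 v2"
proof -
  have dx: "pdx (poly2 c) = (\<lambda>x y. c 1 0 + c 1 1 * y + 2 * c 2 0 * x)"
    by (intro ext) (rule pdx_poly2)
  have dy: "pdy (poly2 c) = (\<lambda>x y. c 0 1 + c 1 1 * x + 2 * c 0 2 * y)"
    by (intro ext) (rule pdy_poly2)
  have "pdx (pdx (poly2 c)) x y = 2 * c 2 0" "pdy (pdx (poly2 c)) x y = c 1 1"
       "pdy (pdy (poly2 c)) x y = 2 * c 0 2"
    unfolding dx dy pdx_def pdy_def
    by (rule DERIV_imp_deriv, auto intro!: derivative_eq_intros)+
  then show ?thesis
    unfolding hess_form_def quad_part_def by (simp add: algebra_simps power2_eq_square)
qed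

lemma poly2_taylor:
  "poly2 c (z1 + x0) (z2 + y0) =
     poly2 c x0 y0 + pdx (poly2 c) x0 y0 * z1 + pdy (poly2 c) x0 y0 * z2 + quad_part c z1 z2"
  unfolding poly2_expand pdx_poly2 pdy_poly2 quad_part_def by algebra

lemma homog_at_infinity: "homog c e1 e2 t 0 = quad_part c (t * e2 + e1) (e2 - t * e1)"
  unfolding homog_def quad_part_def by (simp add: numeral_2_eq_2 atMost_Suc algebra_simps)

lemma inf_V_origin:
  "inf_V p q e1 e2 0 0 = (e2 * quad_part p e1 e2 - e1 * quad_part q e1 e2) / (e1 ^ 2 + e2 ^ 2)"
  unfolding inf_V_def homog_at_infinity by simp

lemma pdx_inf_V_origin:
  "pdx (inf_V p q e1 e2) 0 0 =
     (e2 * quad_polar p e1 e2 e2 (- e1) - e1 * quad_polar q e1 e2 e2 (- e1)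
      - (e1 * quad_part p e1 e2 + e2 * quad_part q e1 e2)) / (e1 ^ 2 + e2 ^ 2)"
proof -
  have "((\<lambda>t. inf_V p q e1 e2 t 0) has_real_derivative
     (e2 * quad_polar p e1 e2 e2 (- e1) - e1 * quad_polar q e1 e2 e2 (- e1)
      - (e1 * quad_part p e1 e2 + e2 * quad_part q e1 e2)) / (e1 ^ 2 + e2 ^ 2)) (at 0)"
    unfolding inf_V_def homog_at_infinity quad_part_def quad_polar_def
    by (rule derivative_eq_intros refl | simp)+ (simp add: algebra_simps power2_eq_square)
  then show ?thesis
    unfolding pdx_def by (rule DERIV_imp_deriv)
qed

lemma sum_squares_pos: "(e1, e2) \<noteq> (0, 0) \<Longrightarrow> e1 ^ 2 + e2 ^ 2 > (0::real)"
  by (auto simp: sum_power2_gt_zero_iff)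

lemma cross_zero_imp_parallel:
  fixes z1 z2 e1 e2 :: real
  assumes "(e1, e2) \<noteq> (0, 0)" and "e2 * z1 - e1 * z2 = 0"
  obtains k where "z1 = k * e1" and "z2 = k * e2"
proof
  let ?n = "e1 ^ 2 + e2 ^ 2"
  have n: "?n > 0" using sum_squares_pos[OF assms(1)] .
  have "?n * z1 = (e1 * z1 + e2 * z2) * e1" "?n * z2 = (e1 * z1 + e2 * z2) * e2"
    using assms(2) by algebra+
  with n show "z1 = ((e1 * z1 + e2 * z2) / ?n) * e1" "z2 = ((e1 * z1 + e2 * z2) / ?n) * e2"
    using assms(1) by (simp_all add: eq_divide_eq mult.commute)
qed

lemma basis_coordinates:
  fixes v1 v2 e1 e2 z1 z2 k :: real
  assumes "v1 * e2 - v2 * e1 \<noteq> 0" and "z1 * e2 - z2 * e1 = k * (v1 * e2 - v2 * e1)"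
  obtains \<beta> where "z1 = k * v1 + \<beta> * e1" and "z2 = k * v2 + \<beta> * e2"
proof
  let ?D = "v1 * e2 - v2 * e1"
  have "z1 * ?D = k * ?D * v1 + (v1 * z2 - v2 * z1) * e1"
       "z2 * ?D = k * ?D * v2 + (v1 * z2 - v2 * z1) * e2"
    using assms(2) by algebra+
  with assms(1) show "z1 = k * v1 + ((v1 * z2 - v2 * z1) / ?D) * e1"
                     "z2 = k * v2 + ((v1 * z2 - v2 * z1) / ?D) * e2"
    by (simp_all add: field_simps)
qed

lemma kernel_vector_not_parallel_eigvec:
  fixes a b c d v1 v2 e1 e2 lam :: real
  assumes "a * v1 + b * v2 = 0" "c * v1 + d * v2 = 0"
    and "a * e1 + b * e2 = lam * e1" "c * e1 + d * e2 = lam * e2"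
    and "lam \<noteq> 0" "(v1, v2) \<noteq> (0, 0)" "(e1, e2) \<noteq> (0, 0)"
  shows "v1 * e2 - v2 * e1 \<noteq> 0"
proof
  assume "v1 * e2 - v2 * e1 = 0"
  then obtain t where v: "v1 = t * e1" "v2 = t * e2"
    using cross_zero_imp_parallel[of e1 e2 v1 v2] assms(7) by (auto simp: algebra_simps)
  have "t * (lam * e1) = 0" "t * (lam * e2) = 0"
    using assms(1-4) unfolding v by algebra+
  with assms(5,6) v show False by auto
qed

lemma left_kernel_orthogonal_eigvec:
  fixes a b c d w1 w2 e1 e2 lam :: real
  assumes "w1 * a + w2 * c = 0" "w1 * b + w2 * d = 0"
    and "a * e1 + b * e2 = lam * e1" "c * e1 + d * e2 = lam * e2" and "lam \<noteq> 0"
  shows "w1 * e1 + w2 * e2 = 0"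
proof -
  have "lam * (w1 * e1 + w2 * e2) = w1 * (a * e1 + b * e2) + w2 * (c * e1 + d * e2)"
    using assms(3,4) by algebra
  also have "\<dots> = e1 * (w1 * a + w2 * c) + e2 * (w1 * b + w2 * d)"
    by algebra
  finally show ?thesis
    using assms(1,2,5) by simp
qed

lemma inf_singular_imp_quad_part_parallel:
  assumes "inf_V p q e1 e2 0 0 = 0" and "(e1, e2) \<noteq> (0, 0)"
  obtains \<kappa> where "quad_part p e1 e2 = \<kappa> * e1" and "quad_part q e1 e2 = \<kappa> * e2"
  using assms sum_squares_pos[OF assms(2)]
  by (auto simp: inf_V_origin intro: cross_zero_imp_parallel[OF assms(2)])

text \<open>Decompose v = (D f + (v \<cdot> e) e) / |e|^2 with f = (e2, -e1) and D = v \<times> e; the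
  condition at infinity controls B(f, e), while B(e, e) = 2 F(e) is parallel to e.\<close>
lemma inf_eigendirection_imp_quad_polar_cross:
  assumes "pdx (inf_V p q e1 e2) 0 0 = 0" and "(e1, e2) \<noteq> (0, 0)"
    and "quad_part p e1 e2 = \<kappa> * e1" "quad_part q e1 e2 = \<kappa> * e2"
  shows "quad_polar p v1 v2 e1 e2 * e2 - quad_polar q v1 v2 e1 e2 * e1 = \<kappa> * (v1 * e2 - v2 * e1)"
proof -
  let ?n = "e1 ^ 2 + e2 ^ 2"
  have "e2 * quad_polar p e1 e2 e2 (- e1) - e1 * quad_polar q e1 e2 e2 (- e1)
      - (e1 * quad_part p e1 e2 + e2 * quad_part q e1 e2) = 0"
    using assms(1,2) unfolding pdx_inf_V_origin by auto
  then have f: "e2 * quad_polar p e1 e2 e2 (- e1) - e1 * quad_polar q e1 e2 e2 (- e1) = \<kappa> * ?n"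
    unfolding assms(3,4) by (simp add: algebra_simps power2_eq_square)
  have "?n * (quad_polar p v1 v2 e1 e2 * e2 - quad_polar q v1 v2 e1 e2 * e1) =
      (v1 * e2 - v2 * e1) * (e2 * quad_polar p e1 e2 e2 (- e1) - e1 * quad_polar q e1 e2 e2 (- e1))
      + (v1 * e1 + v2 * e2) * 2 * (e2 * quad_part p e1 e2 - e1 * quad_part q e1 e2)"
    unfolding quad_polar_def quad_part_def by algebra
  also have "\<dots> = ?n * (\<kappa> * (v1 * e2 - v2 * e1))"
    unfolding f assms(3,4) by algebra
  finally show ?thesis
    using assms(2) by auto
qed

lemma inf_saddle_node_02_quad_part:
  assumes "inf_saddle_node_02 p q e1 e2" and "(e1, e2) \<noteq> (0, 0)"
    and "v1 * e2 - v2 * e1 \<noteq> 0"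
  obtains \<kappa> \<mu> where "quad_part p e1 e2 = \<kappa> * e1" "quad_part q e1 e2 = \<kappa> * e2"
    and "quad_polar p v1 v2 e1 e2 = \<kappa> * v1 + \<mu> * e1"
    and "quad_polar q v1 v2 e1 e2 = \<kappa> * v2 + \<mu> * e2"
proof -
  have "inf_V p q e1 e2 0 0 = 0" "pdx (inf_V p q e1 e2) 0 0 = 0"
    using assms(1) unfolding inf_saddle_node_02_def double_saddle_node_def semi_elemental_def
    by auto
  then obtain \<kappa> where Fe: "quad_part p e1 e2 = \<kappa> * e1" "quad_part q e1 e2 = \<kappa> * e2"
    and "quad_polar p v1 v2 e1 e2 * e2 - quad_polar q v1 v2 e1 e2 * e1 = \<kappa> * (v1 * e2 - v2 * e1)"
    using inf_singular_imp_quad_part_parallel inf_eigendirection_imp_quad_polar_cross assms(2)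
    by metis
  with assms(3) that show ?thesis
    by (metis basis_coordinates)
qed

lemma double_saddle_node_kernel_frame:
  assumes "double_saddle_node (poly2 p) (poly2 q) x0 y0"
    and "nonnull_eigvec (poly2 p) (poly2 q) x0 y0 e1 e2"
  obtains v1 v2 \<alpha> \<rho> where "v1 * e2 - v2 * e1 \<noteq> 0" and "\<alpha> \<noteq> 0"
    and "pdx (poly2 p) x0 y0 * v1 + pdy (poly2 p) x0 y0 * v2 = 0"
    and "pdx (poly2 q) x0 y0 * v1 + pdy (poly2 q) x0 y0 * v2 = 0"
    and "quad_part p v1 v2 = \<alpha> * v1 + \<rho> * e1" "quad_part q v1 v2 = \<alpha> * v2 + \<rho> * e2"
proof -
  define lam where "lam = jac_tr (poly2 p) (poly2 q) x0 y0"
  obtain v1 v2 w1 w2 where lam: "lam \<noteq> 0" and v: "(v1, v2) \<noteq> (0, 0)"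
    and Jv: "pdx (poly2 p) x0 y0 * v1 + pdy (poly2 p) x0 y0 * v2 = 0"
            "pdx (poly2 q) x0 y0 * v1 + pdy (poly2 q) x0 y0 * v2 = 0"
    and wJ: "w1 * pdx (poly2 p) x0 y0 + w2 * pdx (poly2 q) x0 y0 = 0"
            "w1 * pdy (poly2 p) x0 y0 + w2 * pdy (poly2 q) x0 y0 = 0"
    and mult2: "w1 * (2 * quad_part p v1 v2) + w2 * (2 * quad_part q v1 v2) \<noteq> 0"
    using assms(1) unfolding double_saddle_node_def semi_elemental_def hess_form_poly2 lam_def
    by blast
  have e: "(e1, e2) \<noteq> (0, 0)"
    and Je: "pdx (poly2 p) x0 y0 * e1 + pdy (poly2 p) x0 y0 * e2 = lam * e1"
            "pdx (poly2 q) x0 y0 * e1 + pdy (poly2 q) x0 y0 * e2 = lam * e2"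
    using assms(2) unfolding nonnull_eigvec_def lam_def by auto
  have D: "v1 * e2 - v2 * e1 \<noteq> 0"
    using kernel_vector_not_parallel_eigvec[OF Jv Je lam v e] .
  define \<alpha> where "\<alpha> = (quad_part p v1 v2 * e2 - quad_part q v1 v2 * e1) / (v1 * e2 - v2 * e1)"
  obtain \<rho> where Fv: "quad_part p v1 v2 = \<alpha> * v1 + \<rho> * e1" "quad_part q v1 v2 = \<alpha> * v2 + \<rho> * e2"
    using basis_coordinates[OF D, of "quad_part p v1 v2" "quad_part q v1 v2" \<alpha>] D
    unfolding \<alpha>_def by auto
  have "w1 * e1 + w2 * e2 = 0"
    using left_kernel_orthogonal_eigvec[OF wJ Je lam] .
  moreover have "w1 * (2 * quad_part p v1 v2) + w2 * (2 * quad_part q v1 v2) =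
      2 * \<alpha> * (w1 * v1 + w2 * v2) + 2 * \<rho> * (w1 * e1 + w2 * e2)"
    unfolding Fv by algebra
  ultimately have "\<alpha> \<noteq> 0"
    using mult2 by auto
  with D Jv Fv that show ?thesis
    by blast
qed

text \<open>One component of the field in the frame r + s u1 v + u2 e; vi and ei are the
  matching components of v and e, so the lemma serves for both x and y.\<close>
lemma poly2_adapted_frame:
  assumes "poly2 c x0 y0 = 0"
    and "pdx (poly2 c) x0 y0 * v1 + pdy (poly2 c) x0 y0 * v2 = 0"
    and "pdx (poly2 c) x0 y0 * e1 + pdy (poly2 c) x0 y0 * e2 = lam * ei"
    and "quad_part c v1 v2 = \<alpha> * vi + \<rho> * ei"
    and "quad_polar c v1 v2 e1 e2 = \<kappa> * vi + \<mu> * ei"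
    and "quad_part c e1 e2 = \<kappa> * ei"
    and "s * \<alpha> = lam" and "lam \<noteq> 0"
  shows "poly2 c (s * v1 * u1 + e1 * u2 + x0) (s * v2 * u1 + e2 * u2 + y0) =
    lam * (s * vi * (u1 ^ 2 + 2 * (\<kappa> / (2 * lam)) * u1 * u2)
       + ei * (u2 + (s ^ 2 * \<rho> / lam) * u1 ^ 2 + 2 * (s * \<mu> / (2 * lam)) * u1 * u2
               + 2 * (\<kappa> / (2 * lam)) * u2 ^ 2))"
proof -
  have "poly2 c (s * v1 * u1 + e1 * u2 + x0) (s * v2 * u1 + e2 * u2 + y0) =
      (s * u1) * (pdx (poly2 c) x0 y0 * v1 + pdy (poly2 c) x0 y0 * v2)
      + u2 * (pdx (poly2 c) x0 y0 * e1 + pdy (poly2 c) x0 y0 * e2)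
      + quad_part c ((s * u1) * v1 + u2 * e1) ((s * u1) * v2 + u2 * e2)"
    using poly2_taylor[of c "s * v1 * u1 + e1 * u2" x0 "s * v2 * u1 + e2 * u2" y0] assms(1)
    by (simp add: algebra_simps)
  also have "\<dots> = u2 * lam * ei + (s * u1) ^ 2 * (\<alpha> * vi + \<rho> * ei)
      + s * u1 * u2 * (\<kappa> * vi + \<mu> * ei) + u2 ^ 2 * \<kappa> * ei"
    unfolding quad_part_lincomb assms(2-6) by algebra
  also have "\<dots> = lam * (s * vi * (u1 ^ 2 + 2 * (\<kappa> / (2 * lam)) * u1 * u2)
       + ei * (u2 + (s ^ 2 * \<rho> / lam) * u1 ^ 2 + 2 * (s * \<mu> / (2 * lam)) * u1 * u2
               + 2 * (\<kappa> / (2 * lam)) * u2 ^ 2))"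
    using assms(7,8) by (simp add: field_simps power2_eq_square)
  finally show ?thesis .
qed

theorem proposition2p3:
  fixes p q :: "nat \<Rightarrow> nat \<Rightarrow> real" and x0 y0 e1 e2 :: real
  assumes "quadratic_system p q"
    and "double_saddle_node (poly2 p) (poly2 q) x0 y0"
    and "nonnull_eigvec (poly2 p) (poly2 q) x0 y0 e1 e2"
    and "inf_saddle_node_02 p q e1 e2"
  shows "\<exists>a11 a12 a21 a22 b1 b2 c h l m :: real.
           a11 * a22 - a12 * a21 \<noteq> 0 \<and> c \<noteq> 0 \<and>
           (\<forall>u1 u2.
              poly2 p (a11 * u1 + a12 * u2 + b1) (a21 * u1 + a22 * u2 + b2)
                = c * (a11 * (u1 ^ 2 + 2 * h * u1 * u2)
                       + a12 * (u2 + l * u1 ^ 2 + 2 * m * u1 * u2 + 2 * h * u2 ^ 2)) \<and>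
              poly2 q (a11 * u1 + a12 * u2 + b1) (a21 * u1 + a22 * u2 + b2)
                = c * (a21 * (u1 ^ 2 + 2 * h * u1 * u2)
                       + a22 * (u2 + l * u1 ^ 2 + 2 * m * u1 * u2 + 2 * h * u2 ^ 2)))"
proof -
  define lam where "lam = jac_tr (poly2 p) (poly2 q) x0 y0"
  have r: "poly2 p x0 y0 = 0" "poly2 q x0 y0 = 0" "lam \<noteq> 0"
    and e: "(e1, e2) \<noteq> (0, 0)"
    and Je: "pdx (poly2 p) x0 y0 * e1 + pdy (poly2 p) x0 y0 * e2 = lam * e1"
            "pdx (poly2 q) x0 y0 * e1 + pdy (poly2 q) x0 y0 * e2 = lam * e2"
    using assms(2,3) unfolding double_saddle_node_def semi_elemental_def nonnull_eigvec_def lam_def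
    by auto
  obtain v1 v2 \<alpha> \<rho> where D: "v1 * e2 - v2 * e1 \<noteq> 0" and "\<alpha> \<noteq> 0"
    and Jv: "pdx (poly2 p) x0 y0 * v1 + pdy (poly2 p) x0 y0 * v2 = 0"
            "pdx (poly2 q) x0 y0 * v1 + pdy (poly2 q) x0 y0 * v2 = 0"
    and Fv: "quad_part p v1 v2 = \<alpha> * v1 + \<rho> * e1" "quad_part q v1 v2 = \<alpha> * v2 + \<rho> * e2"
    using double_saddle_node_kernel_frame[OF assms(2,3)] .
  obtain \<kappa> \<mu> where Fe: "quad_part p e1 e2 = \<kappa> * e1" "quad_part q e1 e2 = \<kappa> * e2"
    and Bve: "quad_polar p v1 v2 e1 e2 = \<kappa> * v1 + \<mu> * e1"
             "quad_polar q v1 v2 e1 e2 = \<kappa> * v2 + \<mu> * e2"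
    using inf_saddle_node_02_quad_part[OF assms(4) e D] .
  define s where "s = lam / \<alpha>"
  have s: "s * \<alpha> = lam" "s \<noteq> 0"
    using \<open>\<alpha> \<noteq> 0\<close> r(3) unfolding s_def by auto
  show ?thesis
  proof (intro exI conjI allI)
    show "s * v1 * e2 - e1 * (s * v2) \<noteq> 0"
      using D s(2) by (simp add: algebra_simps)
    show "lam \<noteq> 0"
      by (rule r(3))
  qed (rule poly2_adapted_frame[OF r(1) Jv(1) Je(1) Fv(1) Bve(1) Fe(1) s(1) r(3)]
            poly2_adapted_frame[OF r(2) Jv(2) Je(2) Fv(2) Bve(2) Fe(2) s(1) r(3)])+
qed

end
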